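(* Let $n\ge2$, $k\ge1$ be integers, $p\in(0,1/2]$ with $k\le np/2-1$, $\pi$ a probability vector on $[k]$, $i\in[k]$, and $j$ an integer with $1\le j\le np/2-k$. Then $$\Big|\beta_1(j,i)-\frac{\pi[i]}{p}\Big|=O\Big(\frac{e^{-\Omega(np)}}{p}\Big),\qquad \big|\beta_0(j,i)-(1-\pi[i])\big|=O\big(p\,e^{-\Omega(np)}\big),$$ where $O(\cdot),\Omega(\cdot)$ hide universal constants. Consequently, if $np=\Omega\big(\log\max_{i'\in[k]}\frac{1}{\pi[i']}\big)$ with a sufficiently large universal constant hidden in the $\Omega$, then $\beta_1(j,i)\ge\frac{\pi[i]}{2p}$ and $0\le\beta_0(j,i)\le1$.
   Context: $B_{n,p,k'}=\sum_{i'=k'}^n\binom{n}{i'}p^{i'}(1-p)^{n-i'}$. Define $\beta_1(j,i)=\frac{\pi[i]B_{n,p,j+k}}{p}+\big(B_{n-1,p,j+k-1}-\frac{1-pB_{n-1,p,j+k-1}}{1-p}\big)(1-\pi[i])$ and $\beta_0(j,i)=\frac{1-pB_{n-1,p,j+k-1}}{1-p}(1-\pi[i])$. *)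

theory Defs
  imports Complex_Main
begin

definition Btail :: "nat \<Rightarrow> real \<Rightarrow> nat \<Rightarrow> real" where
  "Btail n p m = (\<Sum>i'=m..n. real (n choose i') * p ^ i' * (1 - p) ^ (n - i'))"

definition beta1 :: "nat \<Rightarrow> real \<Rightarrow> nat \<Rightarrow> (nat \<Rightarrow> real) \<Rightarrow> nat \<Rightarrow> nat \<Rightarrow> real" where
  "beta1 n p k \<pi> j i =
     \<pi> i * Btail n p (j + k) / p
     + (Btail (n - 1) p (j + k - 1) - (1 - p * Btail (n - 1) p (j + k - 1)) / (1 - p)) * (1 - \<pi> i)"

definition beta0 :: "nat \<Rightarrow> real \<Rightarrow> nat \<Rightarrow> (nat \<Rightarrow> real) \<Rightarrow> nat \<Rightarrow> nat \<Rightarrow> real" where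
  "beta0 n p k \<pi> j i = (1 - p * Btail (n - 1) p (j + k - 1)) / (1 - p) * (1 - \<pi> i)"

end

theory Submission
  imports Defs "HOL-Analysis.Harmonic_Numbers"
begin

(*
  Write D = 1 - B(n,p,j+k) and d = 1 - B(n-1,p,j+k-1) for the two lower binomial tails.
  Since (1 - p B') / (1 - p) = 1 + p d / (1 - p), the definitions rearrange to
    beta1 = pi/p - (pi D + p (1 - pi) d / (1 - p)) / p,   beta0 = (1 - pi) + p (1 - pi) d / (1 - p),
  so both errors are controlled by the tails. Because j + k <= np/2, exponential tilting with
  factor 1/2 bounds the probability of fewer than m successes by
    2^(m-1) (1 - p/2)^n <= 2^(m-1) e^(-np/2) <= e^(-np/8) / 2      (as ln 2 < 3/4).
  This gives the estimates with C = 1, c = 1/8; the consequences follow with C0 = 8, which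
  forces e^(-np/8) <= pi[i].
*)

lemma Btail_le_one:
  assumes "0 \<le> p" "p \<le> 1"
  shows "Btail n p m \<le> 1"
proof -
  have "Btail n p m \<le> (\<Sum>i\<le>n. real (n choose i) * p ^ i * (1 - p) ^ (n - i))"
    unfolding Btail_def using assms by (intro sum_mono2) auto
  also have "\<dots> = 1"
    using binomial_ring[of p "1 - p" n] by simp
  finally show ?thesis .
qed

lemma Btail_complement:
  assumes "m \<le> n + 1"
  shows "1 - Btail n p m = (\<Sum>i<m. real (n choose i) * p ^ i * (1 - p) ^ (n - i))"
proof -
  have split: "{..n} = {..<m} \<union> {m..n}" using assms by auto
  have "(p + (1 - p)) ^ n
      = (\<Sum>i<m. real (n choose i) * p ^ i * (1 - p) ^ (n - i)) + Btail n p m"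
    unfolding binomial_ring Btail_def split by (subst sum.union_disjoint) auto
  then show ?thesis by simp
qed

lemma one_minus_Btail_le:
  assumes "0 \<le> p" "p \<le> 1" "1 \<le> m" "m \<le> n + 1"
  shows "1 - Btail n p m \<le> 2 ^ (m - 1) * exp (- real n * p / 2)"
proof -
  have "1 - Btail n p m = (\<Sum>i<m. 2 ^ i * (real (n choose i) * (p / 2) ^ i * (1 - p) ^ (n - i)))"
    using assms by (simp add: Btail_complement power_divide)
  also have "\<dots> \<le> (\<Sum>i<m. 2 ^ (m - 1) * (real (n choose i) * (p / 2) ^ i * (1 - p) ^ (n - i)))"
    using assms by (intro sum_mono mult_right_mono power_increasing) auto
  also have "\<dots> \<le> 2 ^ (m - 1) * (\<Sum>i\<le>n. real (n choose i) * (p / 2) ^ i * (1 - p) ^ (n - i))"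
    unfolding sum_distrib_left[symmetric] using assms
    by (intro mult_left_mono sum_mono2) auto
  also have "\<dots> = 2 ^ (m - 1) * (1 - p / 2) ^ n"
    using binomial_ring[of "p / 2" "1 - p" n] by simp
  also have "\<dots> \<le> 2 ^ (m - 1) * exp (- p / 2) ^ n"
    using assms exp_ge_add_one_self[of "- p / 2"] by (intro mult_left_mono power_mono) auto
  also have "\<dots> = 2 ^ (m - 1) * exp (- real n * p / 2)"
    by (simp add: exp_of_nat_mult[symmetric])
  finally show ?thesis .
qed

lemma pow2_mult_exp_le:
  fixes x :: real
  assumes "1 \<le> m" "real m \<le> x / 2"
  shows "2 ^ (m - 1) * exp (- x / 2) \<le> exp (- x / 8) / 2"
proof -
  have "0 \<le> x" using assms by linarith
  have "2 * 2 ^ (m - 1) = (2::real) ^ m"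
    using assms by (simp flip: power_Suc)
  also have "\<dots> = exp (real m * ln 2)"
    by (simp add: exp_of_nat_mult)
  also have "\<dots> \<le> exp (x / 2 * (3 / 4))"
    using assms \<open>0 \<le> x\<close> ln2_le_25_over_36 by (intro exp_mono mult_mono) auto
  finally have "2 * 2 ^ (m - 1) \<le> exp (3 * x / 8)"
    by (simp add: mult.commute)
  then have "2 * (2 ^ (m - 1) * exp (- x / 2)) \<le> exp (3 * x / 8) * exp (- x / 2)"
    by simp
  also have "\<dots> = exp (- x / 8)"
    by (simp flip: exp_add)
  finally show ?thesis by simp
qed

lemma one_minus_Btail_small:
  assumes "0 < p" "p \<le> 1/2" "1 \<le> m" "real m \<le> real n * p / 2"
  shows "1 - Btail n p m \<le> exp (- real n * p / 8) / 2"
proof -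
  have "real n * p \<le> real n * (1 / 2)"
    using assms by (intro mult_left_mono) auto
  then have "m \<le> n + 1"
    using assms by linarith
  then have "1 - Btail n p m \<le> 2 ^ (m - 1) * exp (- real n * p / 2)"
    using assms by (intro one_minus_Btail_le) auto
  also have "\<dots> \<le> exp (- real n * p / 8) / 2"
    using pow2_mult_exp_le[of m "real n * p"] assms by simp
  finally show ?thesis .
qed

lemma one_minus_Btail_pred_small:
  assumes "0 < p" "p \<le> 1/2" "2 \<le> m" "real m \<le> real n * p / 2"
  shows "1 - Btail (n - 1) p (m - 1) \<le> exp (- real n * p / 8) / 2"
proof -
  have "real n * p \<le> real n * (1 / 2)"
    using assms by (intro mult_left_mono) auto
  then have "m \<le> n" "1 \<le> n"
    using assms by linarith+
  then have "1 - Btail (n - 1) p (m - 1) \<le> 2 ^ (m - 2) * exp (- real (n - 1) * p / 2)"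
    using one_minus_Btail_le[of p "m - 1" "n - 1"] assms by (simp add: diff_diff_left numeral_2_eq_2)
  also have "\<dots> = 2 ^ (m - 2) * exp (p / 2) * exp (- real n * p / 2)"
    using \<open>1 \<le> n\<close> by (simp add: of_nat_diff field_simps flip: exp_add)
  also have "\<dots> \<le> 2 ^ (m - 2) * 2 * exp (- real n * p / 2)"
    using exp_bound_half[of "p / 2"] assms by (intro mult_right_mono mult_left_mono) auto
  also have "\<dots> = 2 ^ (m - 1) * exp (- real n * p / 2)"
    using assms by (simp add: power_Suc2[symmetric] Suc_diff_Suc numeral_2_eq_2)
  also have "\<dots> \<le> exp (- real n * p / 8) / 2"
    using pow2_mult_exp_le[of m "real n * p"] assms by simp
  finally show ?thesis .
qed

lemma beta_deviations:
  assumes p: "0 < p" "p \<le> 1/2" and \<pi>: "0 \<le> \<pi> i" "\<pi> i \<le> 1"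
    and tails: "1 - Btail n p (j + k) \<le> \<epsilon>" "1 - Btail (n - 1) p (j + k - 1) \<le> \<epsilon>"
  shows "0 \<le> \<pi> i / p - beta1 n p k \<pi> j i" "\<pi> i / p - beta1 n p k \<pi> j i \<le> \<epsilon> / p"
    and "0 \<le> beta0 n p k \<pi> j i - (1 - \<pi> i)" "beta0 n p k \<pi> j i - (1 - \<pi> i) \<le> 2 * p * \<epsilon>"
proof -
  define D \<delta> where "D = 1 - Btail n p (j + k)" and "\<delta> = 1 - Btail (n - 1) p (j + k - 1)"
  define X where "X = (1 - \<pi> i) * \<delta> / (1 - p)"
  have beta1: "\<pi> i / p - beta1 n p k \<pi> j i = (\<pi> i * D + p * X) / p"
    using p unfolding beta1_def D_def \<delta>_def X_def by (simp add: field_simps)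
  have beta0: "beta0 n p k \<pi> j i - (1 - \<pi> i) = p * X"
    using p unfolding beta0_def \<delta>_def X_def by (simp add: field_simps)
  have "0 \<le> \<delta>" "\<delta> \<le> \<epsilon>" "0 \<le> D" "D \<le> \<epsilon>"
    using p tails Btail_le_one[of p] unfolding D_def \<delta>_def by auto
  then have "0 \<le> (1 - \<pi> i) * \<delta>" "(1 - \<pi> i) * \<delta> \<le> \<epsilon>"
    using \<pi> mult_left_le_one_le[of \<delta> "1 - \<pi> i"] by auto
  then have "0 \<le> X"
    using p unfolding X_def by simp
  have "\<epsilon> * 1 \<le> \<epsilon> * (2 * (1 - p))"
    using \<open>0 \<le> \<delta>\<close> \<open>\<delta> \<le> \<epsilon>\<close> p by (intro mult_left_mono) auto
  then have "(1 - \<pi> i) * \<delta> \<le> 2 * \<epsilon> * (1 - p)"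
    using \<open>(1 - \<pi> i) * \<delta> \<le> \<epsilon>\<close> by (simp add: mult_ac)
  then have "X \<le> 2 * \<epsilon>"
    using p unfolding X_def by (simp add: pos_divide_le_eq)
  \<comment> \<open>As \<open>p \<le> 1 - p\<close>, the numerator of the error of \<open>beta1\<close> is at most the convex
    combination \<open>\<pi> i * D + (1 - \<pi> i) * \<delta>\<close> of the two tails.\<close>
  have "p * ((1 - \<pi> i) * \<delta>) \<le> (1 - p) * ((1 - \<pi> i) * \<delta>)"
    using p \<open>0 \<le> (1 - \<pi> i) * \<delta>\<close> by (intro mult_right_mono) auto
  then have "p * X \<le> (1 - \<pi> i) * \<delta>"
    using p unfolding X_def by (simp add: pos_divide_le_eq mult_ac)
  moreover have "\<pi> i * D + (1 - \<pi> i) * \<delta> \<le> \<pi> i * \<epsilon> + (1 - \<pi> i) * \<epsilon>"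
    using \<pi> \<open>D \<le> \<epsilon>\<close> \<open>\<delta> \<le> \<epsilon>\<close> by (intro add_mono mult_left_mono) auto
  ultimately have "\<pi> i * D + p * X \<le> \<epsilon>"
    by (simp add: algebra_simps)
  moreover have "0 \<le> \<pi> i * D + p * X"
    using \<pi> p \<open>0 \<le> D\<close> \<open>0 \<le> X\<close> by simp
  ultimately show "0 \<le> \<pi> i / p - beta1 n p k \<pi> j i" "\<pi> i / p - beta1 n p k \<pi> j i \<le> \<epsilon> / p"
    unfolding beta1 using p by (simp_all add: divide_right_mono)
  show "0 \<le> beta0 n p k \<pi> j i - (1 - \<pi> i)" "beta0 n p k \<pi> j i - (1 - \<pi> i) \<le> 2 * p * \<epsilon>"
    unfolding beta0 using p \<open>0 \<le> X\<close> \<open>X \<le> 2 * \<epsilon>\<close> by simp_all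
qed

lemma member_le_one_if_sum_eq_one:
  fixes f :: "'a \<Rightarrow> real"
  assumes "finite A" "\<forall>x\<in>A. 0 \<le> f x" "sum f A = 1" "a \<in> A"
  shows "f a \<le> 1"
  using member_le_sum[of a A f] assms by auto

lemma beta_deviations_exp:
  assumes p: "0 < p" "p \<le> 1/2" and \<pi>: "\<forall>i'\<in>{1..k}. 0 \<le> \<pi> i'" "(\<Sum>i'=1..k. \<pi> i') = 1"
    and i: "i \<in> {1..k}" and j: "1 \<le> j" "real j \<le> real n * p / 2 - real k"
  shows "\<bar>beta1 n p k \<pi> j i - \<pi> i / p\<bar> \<le> exp (- real n * p / 8) / (2 * p)"
    and "\<bar>beta0 n p k \<pi> j i - (1 - \<pi> i)\<bar> \<le> p * exp (- real n * p / 8)"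
    and "1 - \<pi> i \<le> beta0 n p k \<pi> j i"
proof -
  have "0 \<le> \<pi> i" "\<pi> i \<le> 1"
    using \<pi> i member_le_one_if_sum_eq_one[of "{1..k}" \<pi> i] by auto
  have m: "2 \<le> j + k" "real (j + k) \<le> real n * p / 2"
    using i j by auto
  have "1 - Btail n p (j + k) \<le> exp (- real n * p / 8) / 2"
    "1 - Btail (n - 1) p (j + k - 1) \<le> exp (- real n * p / 8) / 2"
    using one_minus_Btail_small[OF p _ m(2)] one_minus_Btail_pred_small[OF p m] m by auto
  note dev = beta_deviations[where \<pi> = \<pi> and i = i, OF p \<open>0 \<le> \<pi> i\<close> \<open>\<pi> i \<le> 1\<close> this]
  show "\<bar>beta1 n p k \<pi> j i - \<pi> i / p\<bar> \<le> exp (- real n * p / 8) / (2 * p)"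
    "\<bar>beta0 n p k \<pi> j i - (1 - \<pi> i)\<bar> \<le> p * exp (- real n * p / 8)"
    "1 - \<pi> i \<le> beta0 n p k \<pi> j i"
    using dev by auto
qed

lemma exp_neg_le_if_ln_Max_inverse_le:
  fixes f :: "'a \<Rightarrow> real"
  assumes "finite A" "a \<in> A" "\<forall>x\<in>A. 0 < f x" "0 < c" "c * ln (Max ((\<lambda>x. 1 / f x) ` A)) \<le> t"
  shows "exp (- t / c) \<le> f a"
proof -
  have "1 / f a \<le> Max ((\<lambda>x. 1 / f x) ` A)"
    using assms by (intro Max_ge) auto
  then have "ln (1 / f a) \<le> ln (Max ((\<lambda>x. 1 / f x) ` A))"
    using assms by (intro ln_mono) auto
  then have "- ln (f a) \<le> ln (Max ((\<lambda>x. 1 / f x) ` A))"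
    using assms by (simp add: ln_divide_pos)
  also have "\<dots> \<le> t / c"
    using assms by (simp add: pos_le_divide_eq mult.commute)
  finally have "exp (- t / c) \<le> exp (ln (f a))"
    by simp
  then show ?thesis
    using assms by simp
qed

theorem lemma5:
  shows
  "(\<exists>C c. C > 0 \<and> c > 0 \<and>
      (\<forall>(n::nat) (k::nat) (p::real) (\<pi>::nat \<Rightarrow> real) (i::nat) (j::nat).
         n \<ge> 2 \<longrightarrow> k \<ge> 1 \<longrightarrow> 0 < p \<longrightarrow> p \<le> 1/2 \<longrightarrow>
         real k \<le> real n * p / 2 - 1 \<longrightarrow>
         (\<forall>i'\<in>{1..k}. \<pi> i' \<ge> 0) \<longrightarrow> (\<Sum>i'=1..k. \<pi> i') = 1 \<longrightarrow>
         i \<in> {1..k} \<longrightarrow> 1 \<le> j \<longrightarrow> real j \<le> real n * p / 2 - real k \<longrightarrow>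
         \<bar>beta1 n p k \<pi> j i - \<pi> i / p\<bar> \<le> C * exp (- c * real n * p) / p \<and>
         \<bar>beta0 n p k \<pi> j i - (1 - \<pi> i)\<bar> \<le> C * p * exp (- c * real n * p)))
   \<and>
   (\<exists>C0 > 0.
      (\<forall>(n::nat) (k::nat) (p::real) (\<pi>::nat \<Rightarrow> real) (i::nat) (j::nat).
         n \<ge> 2 \<longrightarrow> k \<ge> 1 \<longrightarrow> 0 < p \<longrightarrow> p \<le> 1/2 \<longrightarrow>
         real k \<le> real n * p / 2 - 1 \<longrightarrow>
         (\<forall>i'\<in>{1..k}. \<pi> i' > 0) \<longrightarrow> (\<Sum>i'=1..k. \<pi> i') = 1 \<longrightarrow>
         i \<in> {1..k} \<longrightarrow> 1 \<le> j \<longrightarrow> real j \<le> real n * p / 2 - real k \<longrightarrow>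
         real n * p \<ge> C0 * ln (Max ((\<lambda>i'. 1 / \<pi> i') ` {1..k})) \<longrightarrow>
         beta1 n p k \<pi> j i \<ge> \<pi> i / (2 * p) \<and>
         0 \<le> beta0 n p k \<pi> j i \<and> beta0 n p k \<pi> j i \<le> 1))"
proof (rule conjI, goal_cases)
  case 1
  show ?case
  proof (rule exI[of _ 1], rule exI[of _ "1/8"], (rule conjI, simp)+, intro allI impI, goal_cases)
    case (1 n k p \<pi> i j)
    then show ?case
      using beta_deviations_exp[of p k \<pi> i j n] by (simp add: divide_right_mono)
  qed
next
  case 2
  show ?case
  proof (rule exI[of _ 8], rule conjI, simp, intro allI impI, goal_cases)
    case (1 n k p \<pi> i j)
    then have p: "0 < p" "p \<le> 1/2" and \<pi>: "\<forall>i'\<in>{1..k}. 0 \<le> \<pi> i'" "(\<Sum>i'=1..k. \<pi> i') = 1"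
      and "i \<in> {1..k}" "1 \<le> j" "real j \<le> real n * p / 2 - real k"
      by auto
    note dev = beta_deviations_exp[OF this]
    have "exp (- real n * p / 8) \<le> \<pi> i"
      using 1 exp_neg_le_if_ln_Max_inverse_le[of "{1..k}" i \<pi> 8 "real n * p"] by simp
    then have "exp (- real n * p / 8) / (2 * p) \<le> \<pi> i / (2 * p)"
      and "p * exp (- real n * p / 8) \<le> 1 / 2 * \<pi> i"
      using p by (intro divide_right_mono mult_mono; simp)+
    moreover have "\<pi> i / p - \<pi> i / (2 * p) = \<pi> i / (2 * p)"
      using p by (simp add: field_simps)
    moreover have "\<pi> i \<le> 1"
      using \<pi> \<open>i \<in> {1..k}\<close> member_le_one_if_sum_eq_one[of "{1..k}" \<pi> i] by auto
    ultimately show ?case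
      using abs_le_D2[OF dev(1)] abs_le_D1[OF dev(2)] dev(3) by linarith
  qed
qed

end
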